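(* Let $\Omega\subset\mathbb{C}$ be a simply connected open set with conformal coordinate $z=x+iy$, let $N:\Omega\to\mathbb{S}^2$ be a smooth harmonic map and let $f:\Omega\to\mathbb{R}^3$ satisfy $f_x=N\times N_y$, $f_y=-N\times N_x$. Let $p\in\Omega$ with $\operatorname{rank}(dN)_p\neq0$. Then, on a neighbourhood of $p$, $f$ is a parallel surface of a regular surface of constant mean curvature, i.e. there are a neighbourhood $U$ of $p$, a regular (immersed) surface $g:U\to\mathbb{R}^3$ with unit normal $N$ and constant mean curvature, and a constant $t$ such that $f=g+tN$ on $U$.
   Context: A smooth map $N:\Omega\to\mathbb{S}^2$ is harmonic iff $N\times(N_{xx}+N_{yy})=0$; the map $f$ (unique up to translation) is called the spherical frontal associated to $N$. A parallel of a surface $g$ with unit normal $N$ is a map of the form $g+tN$, $t\in\mathbb{R}$ constant. *)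

theory Defs
  imports "HOL-Analysis.Analysis"
begin

definition pdx :: "(complex \<Rightarrow> real^3) \<Rightarrow> complex \<Rightarrow> real^3" where
  "pdx F = (\<lambda>z. frechet_derivative F (at z) 1)"

definition pdy :: "(complex \<Rightarrow> real^3) \<Rightarrow> complex \<Rightarrow> real^3" where
  "pdy F = (\<lambda>z. frechet_derivative F (at z) \<i>)"

fun ipd :: "bool list \<Rightarrow> (complex \<Rightarrow> real^3) \<Rightarrow> complex \<Rightarrow> real^3" where
  "ipd [] F = F"
| "ipd (b # bs) F = (if b then pdx (ipd bs F) else pdy (ipd bs F))"

definition smooth_map_on :: "complex set \<Rightarrow> (complex \<Rightarrow> real^3) \<Rightarrow> bool" where
  "smooth_map_on S F \<longleftrightarrow> (\<forall>bs. \<forall>z\<in>S. ipd bs F differentiable (at z))"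

definition harmonic_sphere_map :: "complex set \<Rightarrow> (complex \<Rightarrow> real^3) \<Rightarrow> bool" where
  "harmonic_sphere_map S N \<longleftrightarrow>
     (\<forall>z\<in>S. norm (N z) = 1 \<and> cross3 (N z) (pdx (pdx N) z + pdy (pdy N) z) = 0)"

definition regular_surface_on :: "complex set \<Rightarrow> (complex \<Rightarrow> real^3) \<Rightarrow> bool" where
  "regular_surface_on S g \<longleftrightarrow> smooth_map_on S g \<and> (\<forall>z\<in>S. cross3 (pdx g z) (pdy g z) \<noteq> 0)"

definition unit_normal_on :: "complex set \<Rightarrow> (complex \<Rightarrow> real^3) \<Rightarrow> (complex \<Rightarrow> real^3) \<Rightarrow> bool" where
  "unit_normal_on S g N \<longleftrightarrow>
     (\<forall>z\<in>S. norm (N z) = 1 \<and> N z \<bullet> pdx g z = 0 \<and> N z \<bullet> pdy g z = 0)"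

definition mean_curvature :: "(complex \<Rightarrow> real^3) \<Rightarrow> (complex \<Rightarrow> real^3) \<Rightarrow> complex \<Rightarrow> real" where
  "mean_curvature g N z =
     (let gx = pdx g z; gy = pdy g z;
          E = gx \<bullet> gx; F = gx \<bullet> gy; G = gy \<bullet> gy;
          l = N z \<bullet> pdx (pdx g) z; m = N z \<bullet> pdx (pdy g) z; n = N z \<bullet> pdy (pdy g) z
      in (l * G - 2 * m * F + n * E) / (2 * (E * G - F\<^sup>2)))"

end

theory Submission
  imports Defs
begin

text \<open>For a sign \<open>s = \<plusminus>1\<close> put \<open>g = f + s N\<close>. Since \<open>N\<close> is a unit vector orthogonal to
  \<open>N\<^sub>x, N\<^sub>y\<close>, one finds \<open>g\<^sub>x = N \<times> N\<^sub>y + s N\<^sub>x\<close> and \<open>g\<^sub>y = -s N \<times> g\<^sub>x\<close>: the map \<open>g\<close> is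
  conformal with unit normal \<open>N\<close>, and the trace of its second fundamental form
  \<open>-(N\<^sub>x \<bullet> g\<^sub>x + N\<^sub>y \<bullet> g\<^sub>y)\<close> equals \<open>-s |g\<^sub>x|\<^sup>2\<close>, so \<open>H = -s/2\<close>. At \<open>p\<close> at least one of the
  two signs gives \<open>g\<^sub>x(p) \<noteq> 0\<close> because \<open>dN\<^sub>p \<noteq> 0\<close>, and \<open>g\<close> is regular near \<open>p\<close>.\<close>

lemma has_derivative_cross3:
  assumes "(F has_derivative F') (at z)" "(G has_derivative G') (at z)"
  shows "((\<lambda>w. cross3 (F w) (G w)) has_derivative
           (\<lambda>h. cross3 (F z) (G' h) + cross3 (F' h) (G z))) (at z)"
proof -
  have "bounded_bilinear (cross3 :: real^3 \<Rightarrow> real^3 \<Rightarrow> real^3)"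
    using bilinear_conv_bounded_bilinear bilinear_cross by blast
  from bounded_bilinear.FDERIV[OF this assms] show ?thesis by simp
qed

lemma has_derivative_partials:
  assumes "F differentiable (at z)"
  shows "(F has_derivative (\<lambda>h. Re h *\<^sub>R pdx F z + Im h *\<^sub>R pdy F z)) (at z)"
proof -
  let ?L = "frechet_derivative F (at z)"
  have "linear ?L" using assms linear_frechet_derivative by blast
  have expand: "?L h = Re h *\<^sub>R ?L 1 + Im h *\<^sub>R ?L \<i>" for h
  proof -
    have "Re h *\<^sub>R 1 + Im h *\<^sub>R \<i> = h" by (simp add: complex_eq_iff)
    then have "?L h = ?L (Re h *\<^sub>R 1 + Im h *\<^sub>R \<i>)" by simp
    also have "\<dots> = Re h *\<^sub>R ?L 1 + Im h *\<^sub>R ?L \<i>"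
      using \<open>linear ?L\<close> by (simp add: linear_add linear_scale)
    finally show ?thesis .
  qed
  have "?L = (\<lambda>h. Re h *\<^sub>R pdx F z + Im h *\<^sub>R pdy F z)"
    unfolding pdx_def pdy_def by (rule ext, rule expand)
  with assms frechet_derivative_works show ?thesis by metis
qed

lemma partials_of_has_derivative:
  assumes "(F has_derivative L) (at z)"
  shows "pdx F z = L 1" "pdy F z = L \<i>"
  using frechet_derivative_at[OF assms] unfolding pdx_def pdy_def by auto

lemma partials_cong_open:
  assumes "open S" "z \<in> S" "\<And>w. w \<in> S \<Longrightarrow> F w = G w"
  shows "pdx F z = pdx G z" "pdy F z = pdy G z"
proof -
  have "(F has_derivative L) (at z) \<longleftrightarrow> (G has_derivative L) (at z)" for L
    using has_derivative_transform_within_open[OF _ assms(1,2)] assms(3) by metis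
  then have "frechet_derivative F (at z) = frechet_derivative G (at z)"
    unfolding frechet_derivative_def by simp
  then show "pdx F z = pdx G z" "pdy F z = pdy G z" unfolding pdx_def pdy_def by auto
qed

lemma differentiable_cong_open:
  assumes "open S" "z \<in> S" "\<And>w. w \<in> S \<Longrightarrow> F w = G w" "F differentiable (at z)"
  shows "G differentiable (at z)"
  using assms has_derivative_transform_within_open unfolding differentiable_def by metis

lemma partials_add_scaleR:
  assumes "F differentiable (at z)" "G differentiable (at z)"
  shows "pdx (\<lambda>w. F w + c *\<^sub>R G w) z = pdx F z + c *\<^sub>R pdx G z"
    and "pdy (\<lambda>w. F w + c *\<^sub>R G w) z = pdy F z + c *\<^sub>R pdy G z"
    and "(\<lambda>w. F w + c *\<^sub>R G w) differentiable (at z)"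
proof -
  have d: "((\<lambda>w. F w + c *\<^sub>R G w) has_derivative
     (\<lambda>h. (Re h *\<^sub>R pdx F z + Im h *\<^sub>R pdy F z) + c *\<^sub>R (Re h *\<^sub>R pdx G z + Im h *\<^sub>R pdy G z))) (at z)"
    by (intro has_derivative_add has_derivative_scaleR_right has_derivative_partials assms)
  from partials_of_has_derivative[OF d] d show
    "pdx (\<lambda>w. F w + c *\<^sub>R G w) z = pdx F z + c *\<^sub>R pdx G z"
    "pdy (\<lambda>w. F w + c *\<^sub>R G w) z = pdy F z + c *\<^sub>R pdy G z"
    "(\<lambda>w. F w + c *\<^sub>R G w) differentiable (at z)" by (auto simp: differentiable_def)
qed

lemma partials_cross3:
  assumes "F differentiable (at z)" "G differentiable (at z)"
  shows "pdx (\<lambda>w. cross3 (F w) (G w)) z = cross3 (F z) (pdx G z) + cross3 (pdx F z) (G z)"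
    and "pdy (\<lambda>w. cross3 (F w) (G w)) z = cross3 (F z) (pdy G z) + cross3 (pdy F z) (G z)"
    and "(\<lambda>w. cross3 (F w) (G w)) differentiable (at z)"
proof -
  note d = has_derivative_cross3[OF has_derivative_partials[OF assms(1)]
                                    has_derivative_partials[OF assms(2)]]
  from partials_of_has_derivative[OF d] d show
    "pdx (\<lambda>w. cross3 (F w) (G w)) z = cross3 (F z) (pdx G z) + cross3 (pdx F z) (G z)"
    "pdy (\<lambda>w. cross3 (F w) (G w)) z = cross3 (F z) (pdy G z) + cross3 (pdy F z) (G z)"
    "(\<lambda>w. cross3 (F w) (G w)) differentiable (at z)" by (auto simp: differentiable_def)
qed

lemma partials_inner_const:
  assumes "open S" "z \<in> S" "\<And>w. w \<in> S \<Longrightarrow> F w \<bullet> G w = c"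
    and "F differentiable (at z)" "G differentiable (at z)"
  shows "pdx F z \<bullet> G z + F z \<bullet> pdx G z = 0" "pdy F z \<bullet> G z + F z \<bullet> pdy G z = 0"
proof -
  let ?L = "\<lambda>h. F z \<bullet> (Re h *\<^sub>R pdx G z + Im h *\<^sub>R pdy G z)
                + (Re h *\<^sub>R pdx F z + Im h *\<^sub>R pdy F z) \<bullet> G z"
  have "((\<lambda>w. F w \<bullet> G w) has_derivative ?L) (at z)"
    by (rule has_derivative_inner[OF has_derivative_partials[OF assms(4)]
                                     has_derivative_partials[OF assms(5)]])
  moreover have "((\<lambda>w. F w \<bullet> G w) has_derivative (\<lambda>h. 0)) (at z)"
    using has_derivative_transform_within_open[OF has_derivative_const assms(1,2), of c]
      assms(3) by simp
  ultimately have "?L = (\<lambda>h. 0)" by (rule has_derivative_unique)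
  from fun_cong[OF this, of 1] fun_cong[OF this, of \<i>]
  show "pdx F z \<bullet> G z + F z \<bullet> pdx G z = 0" "pdy F z \<bullet> G z + F z \<bullet> pdy G z = 0"
    by (simp_all add: inner_commute)
qed

definition differentiable_upto :: "nat \<Rightarrow> complex set \<Rightarrow> (complex \<Rightarrow> real^3) \<Rightarrow> bool" where
  "differentiable_upto n S F \<longleftrightarrow>
     (\<forall>bs. length bs \<le> n \<longrightarrow> (\<forall>z\<in>S. ipd bs F differentiable (at z)))"

lemma smooth_map_on_iff_differentiable_upto:
  "smooth_map_on S F \<longleftrightarrow> (\<forall>n. differentiable_upto n S F)"
  unfolding smooth_map_on_def differentiable_upto_def by blast

lemma differentiable_upto_mono:
  "differentiable_upto n S F \<Longrightarrow> m \<le> n \<Longrightarrow> differentiable_upto m S F"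
  unfolding differentiable_upto_def by simp

lemma ipd_append_singleton: "ipd (bs @ [b]) F = ipd bs (if b then pdx F else pdy F)"
  by (induction bs) auto

lemma ipd_cong_open:
  assumes "open S" "\<And>w. w \<in> S \<Longrightarrow> F w = G w" "z \<in> S"
  shows "ipd bs F z = ipd bs G z"
  using assms(3)
proof (induction bs arbitrary: z)
  case (Cons b bs)
  then show ?case using partials_cong_open[OF assms(1) Cons.prems, of "ipd bs F"] by simp
qed (use assms in simp)

lemma differentiable_upto_cong_open:
  assumes "open S" "\<And>w. w \<in> S \<Longrightarrow> F w = G w" "differentiable_upto n S F"
  shows "differentiable_upto n S G"
  unfolding differentiable_upto_def
proof (intro allI impI ballI)
  fix bs :: "bool list" and z assume "length bs \<le> n" "z \<in> S"
  with assms(3) have "ipd bs F differentiable (at z)" unfolding differentiable_upto_def by blast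
  moreover have "\<And>w. w \<in> S \<Longrightarrow> ipd bs F w = ipd bs G w"
    by (rule ipd_cong_open[OF assms(1,2)])
  ultimately show "ipd bs G differentiable (at z)"
    using differentiable_cong_open[OF assms(1) \<open>z \<in> S\<close>] by blast
qed

lemma differentiable_upto_0:
  "differentiable_upto 0 S F \<longleftrightarrow> (\<forall>z\<in>S. F differentiable (at z))"
  unfolding differentiable_upto_def by auto

lemma differentiable_upto_Suc:
  "differentiable_upto (Suc n) S F \<longleftrightarrow>
     (\<forall>z\<in>S. F differentiable (at z)) \<and>
     differentiable_upto n S (pdx F) \<and> differentiable_upto n S (pdy F)"
    (is "?lhs \<longleftrightarrow> ?rhs")
proof
  assume ?lhs
  then have diff: "ipd bs F differentiable (at z)" if "length bs \<le> Suc n" "z \<in> S" for bs z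
    using that unfolding differentiable_upto_def by blast
  have "ipd bs (pdx F) differentiable (at z)" "ipd bs (pdy F) differentiable (at z)"
    if "length bs \<le> n" "z \<in> S" for bs z
    using diff[of "bs @ [True]" z] diff[of "bs @ [False]" z] that
    by (simp_all add: ipd_append_singleton)
  with diff[of "[]"] show ?rhs unfolding differentiable_upto_def by simp
next
  assume ?rhs
  show ?lhs unfolding differentiable_upto_def
  proof (intro allI impI ballI)
    fix bs :: "bool list" and z assume bs: "length bs \<le> Suc n" and "z \<in> S"
    show "ipd bs F differentiable (at z)"
    proof (cases bs rule: rev_cases)
      case Nil
      then show ?thesis using \<open>?rhs\<close> \<open>z \<in> S\<close> by simp
    next
      case (snoc cs b)
      then have "length cs \<le> n" using bs by simp
      with \<open>?rhs\<close> \<open>z \<in> S\<close> show ?thesis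
        unfolding snoc differentiable_upto_def by (cases b) (simp_all add: ipd_append_singleton)
    qed
  qed
qed

lemma differentiable_upto_add_scaleR:
  assumes "open S"
  shows "differentiable_upto n S F \<Longrightarrow> differentiable_upto n S G \<Longrightarrow>
           differentiable_upto n S (\<lambda>w. F w + c *\<^sub>R G w)"
proof (induction n arbitrary: F G)
  case 0
  then show ?case using partials_add_scaleR(3) by (simp add: differentiable_upto_0)
next
  case (Suc n)
  then have dF: "\<forall>z\<in>S. F differentiable (at z)" and dG: "\<forall>z\<in>S. G differentiable (at z)"
    and dx: "differentiable_upto n S (\<lambda>w. pdx F w + c *\<^sub>R pdx G w)"
    and dy: "differentiable_upto n S (\<lambda>w. pdy F w + c *\<^sub>R pdy G w)"
    by (simp_all add: differentiable_upto_Suc)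
  have "pdx F w + c *\<^sub>R pdx G w = pdx (\<lambda>w. F w + c *\<^sub>R G w) w"
    and "pdy F w + c *\<^sub>R pdy G w = pdy (\<lambda>w. F w + c *\<^sub>R G w) w" if "w \<in> S" for w
    using dF dG that by (simp_all add: partials_add_scaleR)
  then have "differentiable_upto n S (pdx (\<lambda>w. F w + c *\<^sub>R G w))"
    and "differentiable_upto n S (pdy (\<lambda>w. F w + c *\<^sub>R G w))"
    by (simp_all add: differentiable_upto_cong_open[OF assms _ dx]
        differentiable_upto_cong_open[OF assms _ dy])
  with dF dG show ?case
    unfolding differentiable_upto_Suc by (simp add: partials_add_scaleR(3))
qed

lemma differentiable_upto_add:
  "open S \<Longrightarrow> differentiable_upto n S F \<Longrightarrow> differentiable_upto n S G \<Longrightarrow>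
     differentiable_upto n S (\<lambda>w. F w + G w)"
  using differentiable_upto_add_scaleR[of S n F G 1] by simp

lemma differentiable_upto_cross3:
  assumes "open S"
  shows "differentiable_upto n S F \<Longrightarrow> differentiable_upto n S G \<Longrightarrow>
           differentiable_upto n S (\<lambda>w. cross3 (F w) (G w))"
proof (induction n arbitrary: F G)
  case 0
  then show ?case using partials_cross3(3) by (simp add: differentiable_upto_0)
next
  case (Suc n)
  have F: "\<forall>z\<in>S. F differentiable (at z)" "differentiable_upto n S F"
      "differentiable_upto n S (pdx F)" "differentiable_upto n S (pdy F)"
    using Suc.prems(1) differentiable_upto_mono[OF Suc.prems(1), of n]
    unfolding differentiable_upto_Suc by simp_all
  have G: "\<forall>z\<in>S. G differentiable (at z)" "differentiable_upto n S G"
      "differentiable_upto n S (pdx G)" "differentiable_upto n S (pdy G)"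
    using Suc.prems(2) differentiable_upto_mono[OF Suc.prems(2), of n]
    unfolding differentiable_upto_Suc by simp_all
  have dx: "differentiable_upto n S (\<lambda>w. cross3 (F w) (pdx G w) + cross3 (pdx F w) (G w))"
    and dy: "differentiable_upto n S (\<lambda>w. cross3 (F w) (pdy G w) + cross3 (pdy F w) (G w))"
    by (intro differentiable_upto_add[OF assms] Suc.IH F(2-4) G(2-4))+
  have
    "cross3 (F w) (pdx G w) + cross3 (pdx F w) (G w) = pdx (\<lambda>w. cross3 (F w) (G w)) w"
    "cross3 (F w) (pdy G w) + cross3 (pdy F w) (G w) = pdy (\<lambda>w. cross3 (F w) (G w)) w"
    if "w \<in> S" for w
    using F(1) G(1) that by (simp_all add: partials_cross3)
  then have "differentiable_upto n S (pdx (\<lambda>w. cross3 (F w) (G w)))"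
    and "differentiable_upto n S (pdy (\<lambda>w. cross3 (F w) (G w)))"
    by (simp_all add: differentiable_upto_cong_open[OF assms _ dx]
        differentiable_upto_cong_open[OF assms _ dy])
  with F(1) G(1) show ?case
    unfolding differentiable_upto_Suc by (simp add: partials_cross3(3))
qed

lemma smooth_map_on_add_scaleR:
  assumes "open S" "smooth_map_on S F" "smooth_map_on S G"
  shows "smooth_map_on S (\<lambda>w. F w + c *\<^sub>R G w)"
  using assms(2,3) differentiable_upto_add_scaleR[OF assms(1)]
  unfolding smooth_map_on_iff_differentiable_upto by blast

lemma smooth_map_on_subset: "smooth_map_on S F \<Longrightarrow> T \<subseteq> S \<Longrightarrow> smooth_map_on T F"
  unfolding smooth_map_on_def by blast

lemma smooth_map_on_differentiable:
  assumes "smooth_map_on S F" "z \<in> S"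
  shows "F differentiable (at z)" "pdx F differentiable (at z)" "pdy F differentiable (at z)"
proof -
  have "ipd bs F differentiable (at z)" for bs
    using assms unfolding smooth_map_on_def by blast
  from this[of "[]"] this[of "[True]"] this[of "[False]"]
  show "F differentiable (at z)" "pdx F differentiable (at z)" "pdy F differentiable (at z)"
    by simp_all
qed

lemma parallel_tangent_frame:
  fixes \<nu> a b gx gy :: "real^3" and s :: real
  assumes \<nu>: "\<nu> \<bullet> \<nu> = 1" "\<nu> \<bullet> a = 0" "\<nu> \<bullet> b = 0" and s: "s * s = 1"
    and gx: "gx = cross3 \<nu> b + s *\<^sub>R a" and gy: "gy = - cross3 \<nu> a + s *\<^sub>R b"
  shows "\<nu> \<bullet> gx = 0" "\<nu> \<bullet> gy = 0" "gx \<bullet> gy = 0" "gy \<bullet> gy = gx \<bullet> gx"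
    and "cross3 gx gy = - (s * (gx \<bullet> gx)) *\<^sub>R \<nu>"
    and "a \<bullet> gx + b \<bullet> gy = s * (gx \<bullet> gx)"
proof -
  show \<nu>gx: "\<nu> \<bullet> gx = 0" using \<nu> by (simp add: gx inner_add_right dot_cross_self)
  show "\<nu> \<bullet> gy = 0" using \<nu> by (simp add: gy inner_add_right inner_diff_right dot_cross_self)
  have \<nu>_cross_gx: "cross3 \<nu> gx = - b + s *\<^sub>R cross3 \<nu> a"
    using \<nu> by (simp add: gx cross_add_right cross_mult_right Lagrange)
  have "- s *\<^sub>R cross3 \<nu> gx = s *\<^sub>R b - (s * s) *\<^sub>R cross3 \<nu> a"
    unfolding \<nu>_cross_gx by (simp add: algebra_simps)
  then have gy_rot: "gy = - s *\<^sub>R cross3 \<nu> gx"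
    using s by (simp add: gy)
  show "gx \<bullet> gy = 0" unfolding gy_rot by (simp add: dot_cross_self)
  have norm_cross: "(norm (cross3 \<nu> x))\<^sup>2 = x \<bullet> x" if "\<nu> \<bullet> x = 0" for x
    using norm_cross_dot[of \<nu> x] that \<nu> by (simp add: power2_norm_eq_inner power_mult_distrib)
  show "gy \<bullet> gy = gx \<bullet> gx"
    unfolding gy_rot using norm_cross[OF \<nu>gx] s by (simp add: power2_norm_eq_inner algebra_simps)
  show "cross3 gx gy = - (s * (gx \<bullet> gx)) *\<^sub>R \<nu>"
    unfolding gy_rot using \<nu>gx by (simp add: cross_mult_right Lagrange inner_commute)
  define T where "T = a \<bullet> cross3 \<nu> b"
  have "(norm (cross3 \<nu> b))\<^sup>2 = b \<bullet> b" using norm_cross \<nu> by simp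
  then have "gx \<bullet> gx = b \<bullet> b + 2 * s * T + a \<bullet> a"
    unfolding gx T_def using s
    by (simp add: inner_add_left inner_add_right power2_norm_eq_inner inner_commute algebra_simps)
  moreover have "b \<bullet> cross3 \<nu> a = - T"
    unfolding T_def by (simp add: cross3_simps)
  then have "a \<bullet> gx + b \<bullet> gy = 2 * T + s * (a \<bullet> a + b \<bullet> b)"
    unfolding gx gy T_def by (simp add: inner_add_right algebra_simps)
  ultimately show "a \<bullet> gx + b \<bullet> gy = s * (gx \<bullet> gx)"
    using s by (simp add: algebra_simps)
qed

lemma exists_sign_cross3_add_nonzero:
  fixes \<nu> a b :: "real^3"
  assumes "\<nu> \<bullet> \<nu> = 1" "\<nu> \<bullet> b = 0" "a \<noteq> 0 \<or> b \<noteq> 0"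
  obtains s :: real where "s * s = 1" "cross3 \<nu> b + s *\<^sub>R a \<noteq> 0"
proof (rule ccontr)
  assume "\<not> thesis"
  with that[of 1] that[of "-1"] have plus: "cross3 \<nu> b + a = 0" and minus: "cross3 \<nu> b - a = 0"
    by auto
  have "2 *\<^sub>R a = (cross3 \<nu> b + a) - (cross3 \<nu> b - a)" by (simp add: scaleR_2)
  then have "a = 0" using plus minus by simp
  moreover from plus \<open>a = 0\<close> have "cross3 \<nu> (cross3 \<nu> b) = 0" by simp
  then have "b = 0" using assms(1,2) by (simp add: Lagrange)
  ultimately show False using assms(3) by simp
qed

lemma mean_curvature_conformal:
  assumes "pdx g z \<bullet> pdy g z = 0" "pdy g z \<bullet> pdy g z = pdx g z \<bullet> pdx g z" "pdx g z \<noteq> 0"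
  shows "mean_curvature g N z =
           (N z \<bullet> pdx (pdx g) z + N z \<bullet> pdy (pdy g) z) / (2 * (pdx g z \<bullet> pdx g z))"
proof -
  have "pdx g z \<bullet> pdx g z \<noteq> 0" using assms(3) by simp
  then show ?thesis
    using assms(1,2) unfolding mean_curvature_def Let_def
    by (simp add: power2_eq_square divide_simps) (simp add: algebra_simps)
qed

lemma second_fundamental_form_diagonal:
  assumes "open S" "z \<in> S" "\<And>w. w \<in> S \<Longrightarrow> N w \<bullet> pdx g w = 0 \<and> N w \<bullet> pdy g w = 0"
    and "N differentiable (at z)" "pdx g differentiable (at z)" "pdy g differentiable (at z)"
  shows "N z \<bullet> pdx (pdx g) z = - (pdx N z \<bullet> pdx g z)"
    and "N z \<bullet> pdy (pdy g) z = - (pdy N z \<bullet> pdy g z)"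
proof -
  have "N w \<bullet> pdx g w = 0" "N w \<bullet> pdy g w = 0" if "w \<in> S" for w
    using assms(3)[OF that] by simp_all
  from partials_inner_const(1)[OF assms(1,2) this(1) assms(4,5)]
    partials_inner_const(2)[OF assms(1,2) this(2) assms(4,6)]
  show "N z \<bullet> pdx (pdx g) z = - (pdx N z \<bullet> pdx g z)"
    and "N z \<bullet> pdy (pdy g) z = - (pdy N z \<bullet> pdy g z)"
    by (simp_all add: eq_neg_iff_add_eq_0 add.commute)
qed

lemma mean_curvature_conformal_normal:
  assumes "open S" "z \<in> S" "\<And>w. w \<in> S \<Longrightarrow> N w \<bullet> pdx g w = 0 \<and> N w \<bullet> pdy g w = 0"
    and "N differentiable (at z)" "pdx g differentiable (at z)" "pdy g differentiable (at z)"
    and "pdx g z \<bullet> pdy g z = 0" "pdy g z \<bullet> pdy g z = pdx g z \<bullet> pdx g z" "pdx g z \<noteq> 0"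
  shows "mean_curvature g N z =
           - (pdx N z \<bullet> pdx g z + pdy N z \<bullet> pdy g z) / (2 * (pdx g z \<bullet> pdx g z))"
proof -
  have "mean_curvature g N z =
          (N z \<bullet> pdx (pdx g) z + N z \<bullet> pdy (pdy g) z) / (2 * (pdx g z \<bullet> pdx g z))"
    by (rule mean_curvature_conformal[OF assms(7-9)])
  also have "\<dots> = - (pdx N z \<bullet> pdx g z + pdy N z \<bullet> pdy g z) / (2 * (pdx g z \<bullet> pdx g z))"
    using second_fundamental_form_diagonal[OF assms(1-6)] by (simp add: minus_add_distrib)
  finally show ?thesis .
qed

lemma smooth_map_on_frontal:
  assumes \<Omega>: "open \<Omega>" and "smooth_map_on \<Omega> N"
    and "\<forall>z\<in>\<Omega>. f differentiable (at z)"
    and fx: "\<forall>z\<in>\<Omega>. pdx f z = cross3 (N z) (pdy N z)"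
    and fy: "\<forall>z\<in>\<Omega>. pdy f z = - cross3 (N z) (pdx N z)"
  shows "smooth_map_on \<Omega> f"
  unfolding smooth_map_on_iff_differentiable_upto
proof
  fix n
  have N: "differentiable_upto k \<Omega> N" for k
    using assms(2) unfolding smooth_map_on_iff_differentiable_upto by blast
  have N': "differentiable_upto k \<Omega> (pdx N)" "differentiable_upto k \<Omega> (pdy N)" for k
    using N[of "Suc k"] unfolding differentiable_upto_Suc by blast+
  show "differentiable_upto n \<Omega> f"
  proof (cases n)
    case 0
    then show ?thesis using assms(3) by (simp add: differentiable_upto_0)
  next
    case (Suc m)
    have "differentiable_upto m \<Omega> (pdx f)"
      by (rule differentiable_upto_cong_open[OF \<Omega> _ differentiable_upto_cross3[OF \<Omega> N N'(2)]])
        (simp add: fx)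
    moreover have "differentiable_upto m \<Omega> (pdy f)"
      by (rule differentiable_upto_cong_open[OF \<Omega> _ differentiable_upto_cross3[OF \<Omega> N'(1) N]])
        (metis fy cross_skew)
    ultimately show ?thesis
      unfolding Suc differentiable_upto_Suc using assms(3) by blast
  qed
qed

lemma unit_map_orthogonal_partials:
  assumes "open S" "z \<in> S" "\<forall>w\<in>S. norm (N w) = 1" "N differentiable (at z)"
  shows "N z \<bullet> pdx N z = 0" "N z \<bullet> pdy N z = 0"
proof -
  have "N w \<bullet> N w = 1" if "w \<in> S" for w
    using assms(3) that by (simp add: dot_square_norm)
  from partials_inner_const[OF assms(1,2) this assms(4,4)]
  show "N z \<bullet> pdx N z = 0" "N z \<bullet> pdy N z = 0" by (simp_all add: inner_commute)
qed

lemma parallel_of_frontal_constant_mean_curvature: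
  fixes \<Omega> :: "complex set" and N f :: "complex \<Rightarrow> real^3" and p :: complex and s :: real
  assumes \<Omega>: "open \<Omega>" and smooth_N: "smooth_map_on \<Omega> N" and unit: "\<forall>z\<in>\<Omega>. norm (N z) = 1"
    and df: "\<forall>z\<in>\<Omega>. f differentiable (at z)"
    and fx: "\<forall>z\<in>\<Omega>. pdx f z = cross3 (N z) (pdy N z)"
    and fy: "\<forall>z\<in>\<Omega>. pdy f z = - cross3 (N z) (pdx N z)"
    and p: "p \<in> \<Omega>" and s: "s * s = 1"
    and gx_p: "cross3 (N p) (pdy N p) + s *\<^sub>R pdx N p \<noteq> 0"
  shows "\<exists>U g t H. open U \<and> p \<in> U \<and> U \<subseteq> \<Omega> \<and>
           regular_surface_on U g \<and> unit_normal_on U g N \<and>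
           (\<forall>z\<in>U. mean_curvature g N z = H) \<and>
           (\<forall>z\<in>U. f z = g z + t *\<^sub>R N z)"
proof -
  define g where "g = (\<lambda>z. f z + s *\<^sub>R N z)"
  have smooth_g: "smooth_map_on \<Omega> g"
    unfolding g_def
    by (rule smooth_map_on_add_scaleR[OF \<Omega> smooth_map_on_frontal[OF \<Omega> smooth_N df fx fy] smooth_N])
  note dN = smooth_map_on_differentiable(1)[OF smooth_N]
  note dg = smooth_map_on_differentiable(2,3)[OF smooth_g]
  have partials_g: "pdx g z = cross3 (N z) (pdy N z) + s *\<^sub>R pdx N z"
    "pdy g z = - cross3 (N z) (pdx N z) + s *\<^sub>R pdy N z" if "z \<in> \<Omega>" for z
    unfolding g_def partials_add_scaleR(1,2)[OF df[rule_format, OF that] dN[OF that]]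
    using fx fy that by simp_all
  have unit_inner: "N z \<bullet> N z = 1" if "z \<in> \<Omega>" for z
    using unit that by (simp add: dot_square_norm)
  have frame:
    "N z \<bullet> pdx g z = 0" "N z \<bullet> pdy g z = 0" "pdx g z \<bullet> pdy g z = 0"
    "pdy g z \<bullet> pdy g z = pdx g z \<bullet> pdx g z"
    "cross3 (pdx g z) (pdy g z) = - (s * (pdx g z \<bullet> pdx g z)) *\<^sub>R N z"
    "pdx N z \<bullet> pdx g z + pdy N z \<bullet> pdy g z = s * (pdx g z \<bullet> pdx g z)"
    if "z \<in> \<Omega>" for z
    by (fact parallel_tangent_frame[OF unit_inner[OF that]
          unit_map_orthogonal_partials[OF \<Omega> that unit dN[OF that]] s partials_g[OF that]])+
  define U where "U = \<Omega> \<inter> pdx g -` (- {0})"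
  have "continuous_on \<Omega> (pdx g)"
    using dg(1) by (meson continuous_at_imp_continuous_on differentiable_imp_continuous_within)
  then have "open U" unfolding U_def by (rule continuous_open_preimage[OF _ \<Omega>]) auto
  have "p \<in> U" unfolding U_def using p gx_p partials_g(1)[OF p] by simp
  have "U \<subseteq> \<Omega>" unfolding U_def by auto
  have U: "z \<in> \<Omega>" "pdx g z \<bullet> pdx g z \<noteq> 0" if "z \<in> U" for z
    using that unfolding U_def by auto
  have "mean_curvature g N z = - s / 2" if "z \<in> U" for z
    using U[OF that] frame(6)[OF U(1)[OF that]]
      mean_curvature_conformal_normal[OF \<Omega> U(1)[OF that] _ dN dg frame(3,4)] frame(1,2)
    by (simp add: field_simps)
  moreover have "cross3 (pdx g z) (pdy g z) \<noteq> 0" if "z \<in> U" for z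
  proof -
    have "N z \<noteq> 0" "s \<noteq> 0" using unit U(1)[OF that] s by auto
    with U[OF that] show ?thesis unfolding frame(5)[OF U(1)[OF that]] by simp
  qed
  then have "regular_surface_on U g"
    unfolding regular_surface_on_def using smooth_map_on_subset[OF smooth_g \<open>U \<subseteq> \<Omega>\<close>] by blast
  moreover have "unit_normal_on U g N"
    using frame(1,2) unit \<open>U \<subseteq> \<Omega>\<close> unfolding unit_normal_on_def by blast
  moreover have "\<forall>z\<in>U. f z = g z + (- s) *\<^sub>R N z" unfolding g_def by simp
  ultimately show ?thesis using \<open>open U\<close> \<open>p \<in> U\<close> \<open>U \<subseteq> \<Omega>\<close> by blast
qed

theorem proposition2p2:
  fixes \<Omega> :: "complex set" and N f :: "complex \<Rightarrow> real^3" and p :: complex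
  assumes "open \<Omega>" and "simply_connected \<Omega>"
    and "smooth_map_on \<Omega> N" and "harmonic_sphere_map \<Omega> N"
    and "\<forall>z\<in>\<Omega>. f differentiable (at z)"
    and "\<forall>z\<in>\<Omega>. pdx f z = cross3 (N z) (pdy N z)"
    and "\<forall>z\<in>\<Omega>. pdy f z = - cross3 (N z) (pdx N z)"
    and "p \<in> \<Omega>"
    and "pdx N p \<noteq> 0 \<or> pdy N p \<noteq> 0"
  shows "\<exists>U g t H. open U \<and> p \<in> U \<and> U \<subseteq> \<Omega> \<and>
           regular_surface_on U g \<and> unit_normal_on U g N \<and>
           (\<forall>z\<in>U. mean_curvature g N z = H) \<and>
           (\<forall>z\<in>U. f z = g z + t *\<^sub>R N z)"
proof -
  \<comment> \<open>Harmonicity and simple connectivity only serve to produce \<open>f\<close>, which is given here;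
    of the harmonicity hypothesis only \<open>|N| = 1\<close> is used.\<close>
  have unit: "\<forall>z\<in>\<Omega>. norm (N z) = 1"
    using assms(4) unfolding harmonic_sphere_map_def by blast
  have "N p \<bullet> pdy N p = 0"
    using unit_map_orthogonal_partials(2)[OF assms(1,8) unit smooth_map_on_differentiable(1)[OF assms(3,8)]] .
  moreover have "N p \<bullet> N p = 1" using unit assms(8) by (simp add: dot_square_norm)
  ultimately obtain s :: real where "s * s = 1" "cross3 (N p) (pdy N p) + s *\<^sub>R pdx N p \<noteq> 0"
    using exists_sign_cross3_add_nonzero assms(9) by blast
  then show ?thesis
    by (rule parallel_of_frontal_constant_mean_curvature[OF assms(1,3) unit assms(5-8)])
qed

end
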